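(* Let $n\ge1$ and let $d,m\ge0$ be integers with $m\ne(n-1)(d+1)$. Then $$\bigg(\sum_{j=1}^n\frac{\alpha_j^{m}}{\prod_{k\ne j}(\alpha_j-\alpha_k)^{d+1}}\bigg)\bigg|_{\alpha=0}=0.$$
   Context: $\alpha_1,\dots,\alpha_n$ are variables; $|_{\alpha=0}$ means setting all $\alpha_k=0$ in the rational function. *)

theory Defs
  imports "HOL-Complex_Analysis.Complex_Analysis"
begin

definition S :: "nat \<Rightarrow> nat \<Rightarrow> nat \<Rightarrow> (nat \<Rightarrow> complex) \<Rightarrow> complex" where
  "S n d m \<alpha> = (\<Sum>j=1..n. \<alpha> j ^ m / (\<Prod>k\<in>{1..n} - {j}. (\<alpha> j - \<alpha> k)) ^ (d + 1))"

text \<open>Value at alpha = 0 of a rational function f in alpha_1..alpha_n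
  (defined at least on tuples with distinct coordinates):
  for every admissible direction alpha, the constant coefficient of the Laurent
  expansion at t = 0 of t \<mapsto> f(t alpha) (computed by a small circle integral)
  equals c.  When f is regular at 0 this is exactly f(0); in general it is the
  degree-0 part, i.e. "setting all alpha_k = 0".\<close>
definition at_alpha_zero :: "nat \<Rightarrow> ((nat \<Rightarrow> complex) \<Rightarrow> complex) \<Rightarrow> complex \<Rightarrow> bool" where
  "at_alpha_zero n f c \<longleftrightarrow>
     (\<forall>\<alpha>. inj_on \<alpha> {1..n} \<longrightarrow>
        (\<exists>r>0. \<forall>\<rho>. 0 < \<rho> \<and> \<rho> < r \<longrightarrow>
           ((\<lambda>t. f (\<lambda>i. t * \<alpha> i) / t) has_contour_integral (2 * of_real pi * \<i> * c))
             (circlepath 0 \<rho>)))"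

end

theory Submission
  imports Defs
begin

text \<open>Each summand of \<open>S n d m\<close> is homogeneous in \<open>\<alpha>\<close> of degree \<open>m - (n - 1)(d + 1)\<close>, so
  \<open>t \<mapsto> S(t\<alpha>)/t\<close> is a constant multiple of a single power \<open>t\<^sup>k\<close> with \<open>k \<noteq> -1\<close>.
  Such a power has a primitive on \<open>\<complex> - {0}\<close>, hence integrates to zero over every circle
  around the origin.\<close>

lemma S_homogeneous:
  fixes t :: complex
  assumes "t \<noteq> 0"
  shows "S n d m (\<lambda>i. t * \<alpha> i) = t powi (int m - int ((n - 1) * (d + 1))) * S n d m \<alpha>"
proof -
  have summand: "(t * \<alpha> j) ^ m / (\<Prod>k\<in>{1..n} - {j}. t * \<alpha> j - t * \<alpha> k) ^ (d + 1)
          = t powi (int m - int ((n - 1) * (d + 1)))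
            * (\<alpha> j ^ m / (\<Prod>k\<in>{1..n} - {j}. \<alpha> j - \<alpha> k) ^ (d + 1))"
    if j: "j \<in> {1..n}" for j
  proof -
    have "(\<Prod>k\<in>{1..n} - {j}. t * \<alpha> j - t * \<alpha> k) = t ^ (n - 1) * (\<Prod>k\<in>{1..n} - {j}. \<alpha> j - \<alpha> k)"
      using j by (simp add: right_diff_distrib[symmetric] prod.distrib del: One_nat_def)
    then have "(\<Prod>k\<in>{1..n} - {j}. t * \<alpha> j - t * \<alpha> k) ^ (d + 1)
        = t ^ ((n - 1) * (d + 1)) * (\<Prod>k\<in>{1..n} - {j}. \<alpha> j - \<alpha> k) ^ (d + 1)"
      by (simp only: power_mult_distrib power_mult)
    then have "(t * \<alpha> j) ^ m / (\<Prod>k\<in>{1..n} - {j}. t * \<alpha> j - t * \<alpha> k) ^ (d + 1)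
        = t ^ m / t ^ ((n - 1) * (d + 1)) * (\<alpha> j ^ m / (\<Prod>k\<in>{1..n} - {j}. \<alpha> j - \<alpha> k) ^ (d + 1))"
      by (simp add: power_mult_distrib)
    also have "t ^ m / t ^ ((n - 1) * (d + 1)) = t powi (int m - int ((n - 1) * (d + 1)))"
      by (simp only: power_int_diff[OF disjI1[OF assms]] power_int_of_nat)
    finally show ?thesis .
  qed
  show ?thesis
    unfolding S_def sum_distrib_left by (rule sum.cong[OF refl summand])
qed

lemma has_contour_integral_powi_circlepath:
  fixes k :: int
  assumes "k \<noteq> -1" and "0 < r"
  shows "((\<lambda>z. z powi k) has_contour_integral 0) (circlepath 0 r)"
proof -
  define F where "F z = z powi (k + 1) / of_int (k + 1)" for z :: complex
  have "(of_int (k + 1) :: complex) \<noteq> 0"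
    using assms(1) by (metis add.commute add_eq_0_iff of_int_eq_0_iff)
  then have "(F has_field_derivative z powi k) (at z within - {0})" if "z \<in> - {0}" for z
    unfolding F_def using that by (auto intro!: derivative_eq_intros)
  moreover have "path_image (circlepath 0 r) \<subseteq> - {0}"
    using assms(2) by (auto simp: path_image_circlepath_nonneg)
  ultimately show ?thesis
    using contour_integral_primitive[of "- {0}" F "\<lambda>z. z powi k" "circlepath 0 r"] by simp
qed

lemma at_alpha_zero_homogeneous:
  fixes k :: int
  assumes homogeneous: "\<And>\<alpha> t. t \<noteq> 0 \<Longrightarrow> f (\<lambda>i. t * \<alpha> i) = t powi k * f \<alpha>"
    and "k \<noteq> 0"
  shows "at_alpha_zero n f 0"
  unfolding at_alpha_zero_def
proof (intro allI impI exI[of _ 1] conjI)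
  fix \<alpha> :: "nat \<Rightarrow> complex" and r :: real
  assume r: "0 < r \<and> r < 1"
  have "((\<lambda>t. f \<alpha> * t powi (k - 1)) has_contour_integral 0) (circlepath 0 r)"
    using has_contour_integral_lmul[OF has_contour_integral_powi_circlepath] assms(2) r by fastforce
  then have "((\<lambda>t. f (\<lambda>i. t * \<alpha> i) / t) has_contour_integral 0) (circlepath 0 r)"
  proof (rule has_contour_integral_eq)
    fix t assume "t \<in> path_image (circlepath 0 r)"
    then have "t \<noteq> 0"
      using r by (auto simp: path_image_circlepath_nonneg)
    then show "f \<alpha> * t powi (k - 1) = f (\<lambda>i. t * \<alpha> i) / t"
      by (simp add: homogeneous power_int_diff)
  qed
  then show "((\<lambda>t. f (\<lambda>i. t * \<alpha> i) / t) has_contour_integral 2 * of_real pi * \<i> * 0) (circlepath 0 r)"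
    by simp
qed simp

theorem lemma3p2:
  fixes n d m :: nat
  assumes "n \<ge> 1" and "m \<noteq> (n - 1) * (d + 1)"
  shows "at_alpha_zero n (S n d m) 0"
proof (rule at_alpha_zero_homogeneous)
  show "S n d m (\<lambda>i. t * \<alpha> i) = t powi (int m - int ((n - 1) * (d + 1))) * S n d m \<alpha>"
    if "t \<noteq> 0" for \<alpha> t
    using that by (rule S_homogeneous)
  show "int m - int ((n - 1) * (d + 1)) \<noteq> 0"
    using assms(2) by linarith
qed

end
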